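(* Let $G=(V,E)$ be a finite simple graph on $n$ vertices and $C\subseteq V$ such that no vertex of $V\setminus C$ is isolated in $G$. Let $t,k$ be positive integers with $t\le k$, and let $S=(v_1,\dots,v_t)$ and $S'=(v_1,\dots,v_t,v_{t+1},\dots,v_k)$ be legal sequences of $G;C$. Then $$k\le n-\Big|\bigcup_{i=1}^t N\langle v_i\rangle\Big| + t.$$
   Context: $N\langle v\rangle = N[v]$ (closed neighborhood) if $v\in C$ and $N\langle v\rangle=N(v)$ (open neighborhood) if $v\notin C$. A sequence $(v_1,\dots,v_k)$ of distinct vertices is a legal sequence of $G;C$ if $N\langle v_i\rangle\setminus\bigcup_{j=1}^{i-1}N\langle v_j\rangle\neq\emptyset$ for all $i=2,\dots,k$. *)

theory Defs
  imports Main
begin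

definition simple_graph :: "'a set \<Rightarrow> ('a \<Rightarrow> 'a \<Rightarrow> bool) \<Rightarrow> bool" where
  "simple_graph V E \<longleftrightarrow> finite V \<and> (\<forall>u v. E u v \<longrightarrow> u \<in> V \<and> v \<in> V)
     \<and> (\<forall>u v. E u v \<longrightarrow> E v u) \<and> (\<forall>v. \<not> E v v)"

definition open_nbhd :: "'a set \<Rightarrow> ('a \<Rightarrow> 'a \<Rightarrow> bool) \<Rightarrow> 'a \<Rightarrow> 'a set" where
  "open_nbhd V E v = {u \<in> V. E v u}"

definition closed_nbhd :: "'a set \<Rightarrow> ('a \<Rightarrow> 'a \<Rightarrow> bool) \<Rightarrow> 'a \<Rightarrow> 'a set" where
  "closed_nbhd V E v = insert v (open_nbhd V E v)"

definition nbhdC :: "'a set \<Rightarrow> ('a \<Rightarrow> 'a \<Rightarrow> bool) \<Rightarrow> 'a set \<Rightarrow> 'a \<Rightarrow> 'a set" where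
  "nbhdC V E C v = (if v \<in> C then closed_nbhd V E v else open_nbhd V E v)"

definition legal_seq :: "'a set \<Rightarrow> ('a \<Rightarrow> 'a \<Rightarrow> bool) \<Rightarrow> 'a set \<Rightarrow> 'a list \<Rightarrow> bool" where
  "legal_seq V E C s \<longleftrightarrow> distinct s \<and> set s \<subseteq> V \<and>
     (\<forall>i. 1 \<le> i \<and> i < length s \<longrightarrow>
        nbhdC V E C (s ! i) - (\<Union>j<i. nbhdC V E C (s ! j)) \<noteq> {})"

end

theory Submission
  imports Defs
begin

(* Every vertex v_i with i > t that S' appends to S footprints a new vertex, so the union of
   the neighbourhoods N<v_1>, ..., N<v_i> grows strictly from i = t to i = k.  It starts at
   the union U for S and stays inside V, hence k - t <= |V| - |U|. *)

definition footprint :: "'a set \<Rightarrow> ('a \<Rightarrow> 'a \<Rightarrow> bool) \<Rightarrow> 'a set \<Rightarrow> 'a list \<Rightarrow> nat \<Rightarrow> 'a set" where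
  "footprint V E C s i = (\<Union>j<i. nbhdC V E C (s ! j))"

lemma nbhdC_subset: "v \<in> V \<Longrightarrow> nbhdC V E C v \<subseteq> V"
  unfolding nbhdC_def closed_nbhd_def open_nbhd_def by auto

lemma footprint_Suc:
  "footprint V E C s (Suc i) = footprint V E C s i \<union> nbhdC V E C (s ! i)"
  unfolding footprint_def by (auto simp: lessThan_Suc)

lemma footprint_take:
  "i \<le> n \<Longrightarrow> footprint V E C (take n s) i = footprint V E C s i"
  unfolding footprint_def by simp

lemma legal_seq_set_subset: "legal_seq V E C s \<Longrightarrow> set s \<subseteq> V"
  by (simp add: legal_seq_def)

lemma legal_seq_footprint_new:
  "legal_seq V E C s \<Longrightarrow> 1 \<le> i \<Longrightarrow> i < length s \<Longrightarrow>
    nbhdC V E C (s ! i) - footprint V E C s i \<noteq> {}"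
  by (simp add: legal_seq_def footprint_def)

lemma footprint_subset:
  assumes "legal_seq V E C s" and "i \<le> length s"
  shows "footprint V E C s i \<subseteq> V"
proof -
  have "s ! j \<in> V" if "j < i" for j
    using legal_seq_set_subset[OF assms(1)] assms(2) that by auto
  then show ?thesis
    unfolding footprint_def by (simp add: UN_subset_iff nbhdC_subset)
qed

lemma legal_seq_footprint_card_less:
  assumes "finite V" and "legal_seq V E C s" and "1 \<le> i" and "i < length s"
  shows "card (footprint V E C s i) < card (footprint V E C s (Suc i))"
proof (rule psubset_card_mono)
  show "finite (footprint V E C s (Suc i))"
    using footprint_subset[OF assms(2), of "Suc i"] assms(1,4) finite_subset by auto
  show "footprint V E C s i \<subset> footprint V E C s (Suc i)"
    using legal_seq_footprint_new[OF assms(2-4)] unfolding footprint_Suc by blast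
qed

lemma legal_seq_footprint_card_grows:
  assumes "finite V" and "legal_seq V E C s" and "0 < i" and "i \<le> j" and "j \<le> length s"
  shows "card (footprint V E C s i) + (j - i) \<le> card (footprint V E C s j)"
  using assms(4,5)
proof (induction j rule: dec_induct)
  case base
  then show ?case by simp
next
  case (step j)
  then show ?case
    using legal_seq_footprint_card_less[OF assms(1,2), of j] assms(3) by simp
qed

theorem proposition2:
  fixes V :: "'a set" and E :: "'a \<Rightarrow> 'a \<Rightarrow> bool" and C :: "'a set"
    and S S' :: "'a list" and t k :: nat
  assumes "simple_graph V E"
    and "C \<subseteq> V"
    and "\<forall>v \<in> V - C. \<exists>u. E v u"
    and "0 < t" and "t \<le> k"
    and "length S = t" and "length S' = k" and "take t S' = S"
    and "legal_seq V E C S" and "legal_seq V E C S'"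
  shows "k \<le> card V - card (\<Union>i<t. nbhdC V E C (S ! i)) + t"
proof -
  have "finite V"
    using assms(1) unfolding simple_graph_def by blast
  have union_eq: "(\<Union>i<t. nbhdC V E C (S ! i)) = footprint V E C S' t"
    using footprint_take[of t t V E C S'] assms(8) unfolding footprint_def by simp
  have "card (footprint V E C S' t) + (k - t) \<le> card (footprint V E C S' k)"
    using legal_seq_footprint_card_grows[OF \<open>finite V\<close> assms(10,4,5)] assms(7) by simp
  moreover have "card (footprint V E C S' k) \<le> card V"
    using footprint_subset[OF assms(10), of k] assms(7) \<open>finite V\<close> by (simp add: card_mono)
  ultimately show ?thesis
    unfolding union_eq using assms(5) by linarith
qed

end
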